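(* For all integers $n,\ell\geq 3$ the shift hypergraph $\mathrm{Sh}^{(3)}(n,\ell)$ is $K_4^{(3)-}$-free, i.e. no four of its vertices span three or more edges.
   Context: For integers $n,\ell\geq k\geq 2$ the $k$-uniform shift hypergraph $\mathrm{Sh}^{(k)}(n,\ell)$ has as vertex set the family of all $\ell$-element subsets of $[n]=\{1,\dots,n\}$, and for every increasing sequence $a_1<\dots<a_{k+\ell-1}$ of integers from $[n]$ it has the edge $\{x_1,\dots,x_k\}$ where $x_i=\{a_i,a_{i+1},\dots,a_{i+\ell-1}\}$ for $i\in[k]$; these are all its edges. $K_4^{(3)-}$ denotes the $3$-uniform hypergraph with four vertices and three edges. *)

theory Defs
  imports Main
begin

definition shift_vertices :: "nat \<Rightarrow> nat \<Rightarrow> nat set set" where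
  "shift_vertices n l = {x. x \<subseteq> {1..n} \<and> card x = l}"

definition shift_edges :: "nat \<Rightarrow> nat \<Rightarrow> nat \<Rightarrow> nat set set set" where
  "shift_edges k n l =
     {e. \<exists>a :: nat \<Rightarrow> nat.
           strict_mono_on {1..k+l-1} a \<and> a ` {1..k+l-1} \<subseteq> {1..n} \<and>
           e = (\<lambda>i. a ` {i..i+l-1}) ` {1..k}}"

definition K4minus_free :: "'a set \<Rightarrow> 'a set set \<Rightarrow> bool" where
  "K4minus_free V E \<longleftrightarrow>
     (\<forall>S. S \<subseteq> V \<and> card S = 4 \<longrightarrow> card {e \<in> E. e \<subseteq> S} < 3)"

end

theory Submission
  imports Defs
begin

text \<open>Order the three vertices of a shift edge by their least elements. Consecutive vertices
  then share \<open>l - 1\<close> elements and the outer two share only \<open>l - 2\<close>, so a pair of vertices is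
  ``far'' (shares fewer than \<open>l - 1\<close> elements) exactly when the third vertex of the edge lies
  strictly between them in this order. Three edges on four vertices are \<open>{b,c,d}\<close>, \<open>{a,c,d}\<close>,
  \<open>{a,b,d}\<close>, and each pair \<open>{t,d}\<close> lies in two of them. Hence for each \<open>t \<in> {a,b,c}\<close> the
  other two of \<open>a, b, c\<close> lie either both or neither between \<open>t\<close> and \<open>d\<close>, which no four
  distinct numbers allow.\<close>

definition between :: "nat \<Rightarrow> nat \<Rightarrow> nat \<Rightarrow> bool" where
  "between x y z \<longleftrightarrow> (x < y \<and> y < z) \<or> (z < y \<and> y < x)"

lemma between_iff_less_iff:
  assumes "x \<noteq> y" and "y \<noteq> z"
  shows "between x y z \<longleftrightarrow> (x < y \<longleftrightarrow> y < z)"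
  using assms unfolding between_def by auto

text \<open>A parity argument: with \<open>between t u d = (t < u \<longleftrightarrow> u < d)\<close>, the exclusive or of
  all six sides of the three equivalences cancels each atom \<open>u < d\<close> and leaves the exclusive or
  of \<open>t < u\<close> and \<open>u < t\<close> over the three pairs in \<open>{a,b,c}\<close>, which is \<open>True\<close>, not \<open>False\<close>.\<close>
lemma no_two_sided_betweenness:
  fixes a b c d :: nat
  assumes "distinct [a, b, c, d]"
  shows "\<not> ((between c b d \<longleftrightarrow> between c a d) \<and> (between b c d \<longleftrightarrow> between b a d)
            \<and> (between a c d \<longleftrightarrow> between a b d))"
proof -
  have "b < a \<longleftrightarrow> \<not> a < b" "c < a \<longleftrightarrow> \<not> a < c" "c < b \<longleftrightarrow> \<not> b < c"
    using assms by auto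
  then show ?thesis using assms by (simp add: between_iff_less_iff) argo
qed

definition outer_far_triple :: "('a \<Rightarrow> nat) \<Rightarrow> ('a \<Rightarrow> 'a \<Rightarrow> bool) \<Rightarrow> 'a set \<Rightarrow> bool" where
  "outer_far_triple f far T \<longleftrightarrow>
     (\<exists>x y z. T = {x, y, z} \<and> f x < f y \<and> f y < f z \<and> \<not> far x y \<and> \<not> far y z \<and> far x z)"

lemma outer_far_triple_card:
  assumes "outer_far_triple f far T"
  shows "card T = 3"
proof -
  obtain x y z where "T = {x, y, z}" and "f x < f y" and "f y < f z"
    using assms unfolding outer_far_triple_def by blast
  then show ?thesis by (auto simp: card_insert_if)
qed

lemma outer_far_triple_between:
  assumes "symp far" and "outer_far_triple f far {u, v, w}"
  shows "far u v \<longleftrightarrow> between (f u) (f w) (f v)" and "distinct [f u, f v, f w]"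
proof -
  obtain x y z where xyz: "{u, v, w} = {x, y, z}" and ord: "f x < f y" "f y < f z"
    and far: "\<not> far x y" "\<not> far y z" "far x z"
    using assms(2) unfolding outer_far_triple_def by blast
  have far': "\<not> far y x" "\<not> far z y" "far z x" using far assms(1) by (auto dest: sympD)
  have "u \<in> {x, y, z}" "v \<in> {x, y, z}" "w \<in> {x, y, z}" "x \<in> {u, v, w}" "y \<in> {u, v, w}"
    "z \<in> {u, v, w}"
    using xyz by blast+
  then show "far u v \<longleftrightarrow> between (f u) (f w) (f v)" and "distinct [f u, f v, f w]"
    using ord far far' unfolding between_def by auto
qed

lemma no_three_outer_far_triples_on_four:
  assumes "symp far" and "outer_far_triple f far {b, c, d}" and "outer_far_triple f far {a, c, d}"
    and "outer_far_triple f far {a, b, d}"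
  shows False
proof -
  have triples: "outer_far_triple f far {c, d, b}" "outer_far_triple f far {c, d, a}"
    "outer_far_triple f far {b, d, c}" "outer_far_triple f far {b, d, a}"
    "outer_far_triple f far {a, d, c}" "outer_far_triple f far {a, d, b}"
    using assms(2-4) by (simp_all add: insert_commute)
  note far_iff = triples[THEN outer_far_triple_between(1)[OF assms(1)]]
  have "distinct [f b, f c, f d]" "distinct [f a, f c, f d]" "distinct [f a, f b, f d]"
    using outer_far_triple_between(2)[OF assms(1)] assms(2-4) by blast+
  then have "distinct [f a, f b, f c, f d]" by auto
  then show False using no_two_sided_betweenness far_iff by blast
qed

lemma Min_image_strict_mono_on_atLeastAtMost:
  fixes a :: "nat \<Rightarrow> 'b::linorder"
  assumes "strict_mono_on D a" and "{i..j} \<subseteq> D" and "i \<le> j"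
  shows "Min (a ` {i..j}) = a i"
proof (rule Min_eqI)
  fix y assume "y \<in> a ` {i..j}"
  then obtain k where "k \<in> {i..j}" and y: "y = a k" by blast
  then have "i \<in> D" "k \<in> D" "i \<le> k" using assms(2,3) by auto
  then show "a i \<le> y" using strict_mono_on_leD[OF assms(1)] y by simp
qed (use assms(3) in auto)

lemma card_image_Int_inj_on:
  assumes "inj_on a D" and "I \<subseteq> D" and "J \<subseteq> D"
  shows "card (a ` I \<inter> a ` J) = card (I \<inter> J)"
proof -
  have "a ` I \<inter> a ` J = a ` (I \<inter> J)" using inj_on_image_Int[OF assms] by simp
  moreover have "inj_on a (I \<inter> J)" by (rule inj_on_subset[OF assms(1)]) (use assms(2) in blast)
  ultimately show ?thesis by (simp add: card_image)
qed

lemma shift_edge_3_cases: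
  assumes "e \<in> shift_edges 3 n l"
  obtains a :: "nat \<Rightarrow> nat" where "strict_mono_on {1..l+2} a"
    and "e = {a ` {1..l}, a ` {2..l+1}, a ` {3..l+2}}"
proof -
  obtain a :: "nat \<Rightarrow> nat" where "strict_mono_on {1..3+l-1} a"
    and "e = (\<lambda>i. a ` {i..i+l-1}) ` {1..3}"
    using assms unfolding shift_edges_def by blast
  moreover have "{1..3::nat} = {1, 2, 3}" by auto
  ultimately show ?thesis by (intro that) (simp_all add: eval_nat_numeral)
qed

lemma shift_edge_3_outer_far_triple:
  assumes "e \<in> shift_edges 3 n l" and "l \<ge> 2"
  shows "outer_far_triple Min (\<lambda>u v. card (u \<inter> v) \<noteq> l - 1) e"
proof -
  obtain a :: "nat \<Rightarrow> nat" where mono: "strict_mono_on {1..l+2} a"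
    and e: "e = {a ` {1..l}, a ` {2..l+1}, a ` {3..l+2}}"
    using assms(1) by (rule shift_edge_3_cases)
  have inj: "inj_on a {1..l+2}" using mono by (rule strict_mono_on_imp_inj_on)
  have sub: "{1..l} \<subseteq> {1..l+2}" "{2..l+1} \<subseteq> {1..l+2}" "{3..l+2} \<subseteq> {1..l+2}" by auto
  have "Min (a ` {1..l}) = a 1" "Min (a ` {2..l+1}) = a 2" "Min (a ` {3..l+2}) = a 3"
    using assms(2) sub by (simp_all add: Min_image_strict_mono_on_atLeastAtMost[OF mono])
  moreover have "a 1 < a 2" "a 2 < a 3" using assms(2) by (simp_all add: strict_mono_onD[OF mono])
  moreover have "card (a ` {1..l} \<inter> a ` {2..l+1}) = l - 1"
    "card (a ` {2..l+1} \<inter> a ` {3..l+2}) = l - 1"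
    "card (a ` {1..l} \<inter> a ` {3..l+2}) = l - 2"
    using card_image_Int_inj_on[OF inj sub(1,2)] card_image_Int_inj_on[OF inj sub(2,3)]
      card_image_Int_inj_on[OF inj sub(1,3)] by simp_all
  ultimately show ?thesis
    unfolding outer_far_triple_def e using assms(2)
    by (intro exI[of _ "a ` {1..l}"] exI[of _ "a ` {2..l+1}"] exI[of _ "a ` {3..l+2}"]) simp
qed

lemma card_Suc_subset_eq_Diff_singleton:
  assumes "card S = Suc k" and "e \<subseteq> S" and "card e = k"
  obtains x where "x \<in> S" and "e = S - {x}"
proof -
  have "finite S" by (rule card_ge_0_finite) (simp add: assms(1))
  then have "card (S - e) = 1" using assms by (simp add: card_Diff_subset finite_subset)
  then obtain x where "S - e = {x}" by (auto simp: card_1_singleton_iff)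
  then show ?thesis using assms(2) by (intro that) auto
qed

lemma three_3_subsets_of_4_set:
  assumes "card S = 4" and "e1 \<subseteq> S" "e2 \<subseteq> S" "e3 \<subseteq> S"
    and "card e1 = 3" "card e2 = 3" "card e3 = 3" and "distinct [e1, e2, e3]"
  obtains a b c d where "e1 = {b, c, d}" "e2 = {a, c, d}" "e3 = {a, b, d}"
proof -
  have S: "card S = Suc 3" using assms(1) by simp
  obtain a where a: "a \<in> S" "e1 = S - {a}"
    using card_Suc_subset_eq_Diff_singleton[OF S assms(2,5)] .
  obtain b where b: "b \<in> S" "e2 = S - {b}"
    using card_Suc_subset_eq_Diff_singleton[OF S assms(3,6)] .
  obtain c where c: "c \<in> S" "e3 = S - {c}"
    using card_Suc_subset_eq_Diff_singleton[OF S assms(4,7)] .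
  have "distinct [a, b, c]" using a b c assms(8) by auto
  then have "card (S - {a, b, c}) = 1" using assms(1) a b c by (simp add: card_Diff_subset)
  then obtain d where "S - {a, b, c} = {d}" by (auto simp: card_1_singleton_iff)
  then have "S = {a, b, c, d}" and "d \<notin> {a, b, c}" using a b c by auto
  then show ?thesis using a b c \<open>distinct [a, b, c]\<close> by (intro that) auto
qed

lemma card_outer_far_triples_in_4_set:
  assumes "symp far" and "card S = 4" and "\<And>T. T \<in> F \<Longrightarrow> T \<subseteq> S \<and> outer_far_triple f far T"
  shows "card F < 3"
proof (rule ccontr)
  assume "\<not> card F < 3"
  then obtain G where "G \<subseteq> F" and "card G = 3"
    by (meson not_less obtain_subset_with_card_n)
  then obtain e1 e2 e3 where "{e1, e2, e3} \<subseteq> F" and "distinct [e1, e2, e3]"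
    by (auto simp: card_3_iff)
  then have sub: "e1 \<subseteq> S" "e2 \<subseteq> S" "e3 \<subseteq> S"
    and triple: "outer_far_triple f far e1" "outer_far_triple f far e2" "outer_far_triple f far e3"
    using assms(3) by auto
  obtain a b c d where "e1 = {b, c, d}" "e2 = {a, c, d}" "e3 = {a, b, d}"
    using three_3_subsets_of_4_set[OF assms(2) sub triple[THEN outer_far_triple_card]
        \<open>distinct [e1, e2, e3]\<close>] .
  then show False using no_three_outer_far_triples_on_four[OF assms(1)] triple by blast
qed

theorem lemma3p4:
  fixes n l :: nat
  assumes "n \<ge> 3" and "l \<ge> 3"
  shows "K4minus_free (shift_vertices n l) (shift_edges 3 n l)"
  unfolding K4minus_free_def
proof (intro allI impI)
  fix S :: "nat set set"
  assume "S \<subseteq> shift_vertices n l \<and> card S = 4"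
  then have "card S = 4" by simp
  define far where "far u v \<longleftrightarrow> card (u \<inter> v) \<noteq> l - 1" for u v :: "nat set"
  have "symp far" unfolding far_def by (auto intro: sympI simp: Int_commute)
  have edge: "outer_far_triple Min far e" if "e \<in> shift_edges 3 n l" for e
    unfolding far_def using shift_edge_3_outer_far_triple that assms(2) by simp
  show "card {e \<in> shift_edges 3 n l. e \<subseteq> S} < 3"
    by (rule card_outer_far_triples_in_4_set[where f = Min, OF \<open>symp far\<close> \<open>card S = 4\<close>])
      (simp add: edge)
qed

end
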